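(* In the maximum-weight online bipartite left-perfect matching problem with general nonnegative weights under vertex arrivals with a hard budget $k=4$ on the number of reassignments per arrival (defined in the context), the most-profitable-augmenting-path algorithm described in the context is $\frac12$-competitive: on every instance, the weight of the final left-perfect matching it outputs is at least $\frac12$ times the maximum weight of a left-perfect matching in $G$.
   Context: Problem: $G=(L\cup R,E)$ is a complete bipartite graph with $|L|\le|R|$ and edge weights $w:E\to\mathbb{Q}_{\ge 0}$ (no triangle inequality is assumed). The algorithm initially knows $R$ (and $k=4$). Over $|L|$ timesteps the vertices of $L$ arrive one at a time, together with all incident edges and their weights. At the end of each timestep the algorithm must output a left-perfect matching of the revealed graph, i.e., a matching in which every arrived vertex of $L$ is matched. The new matching $M_2$ must be obtainable from the previous one $M_1$ (empty before the first timestep) by at most $k$ (re)assignments, the number of (re)assignments being the number of vertices of nonzero degree in $M_1\triangle M_2$; once a vertex is matched it must remain matched afterwards. The weight of a matching is the sum of the weights of its edges. An augmenting path with respect to a matching $M$ is a path between two distinct vertices not covered by $M$ whose edges alternate between non-$M$ and $M$ edges; its profit is the weight of $M\triangle P$ minus the weight of $M$. Algorithm: when a vertex $u$ arrives, among all augmenting paths with respect to the current matching that contain $u$ and have at most $k$ vertices (i.e., length at most $3$), choose one $P$ of maximum profit and output $M\triangle P$. *)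

theory Defs
  imports Complex_Main
begin

text \<open>Vertices of L have type 'l, vertices of R have type 'r; a vertex of the
  bipartite graph is an element of the sum type.  An edge {l,r} (l in L, r in R)
  is represented by the pair (l, r).\<close>

type_synonym ('l, 'r) vtx = "'l + 'r"

definition is_matching :: "('l \<times> 'r) set \<Rightarrow> bool" where
  "is_matching M \<longleftrightarrow>
     (\<forall>l r l' r'. (l, r) \<in> M \<longrightarrow> (l', r') \<in> M \<longrightarrow> (l = l' \<longleftrightarrow> r = r'))"

definition left_perfect :: "'l set \<Rightarrow> 'r set \<Rightarrow> ('l \<times> 'r) set \<Rightarrow> bool" where
  "left_perfect A R M \<longleftrightarrow> is_matching M \<and> M \<subseteq> A \<times> R \<and> (\<forall>l\<in>A. \<exists>r. (l, r) \<in> M)"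

definition mweight :: "('l \<Rightarrow> 'r \<Rightarrow> rat) \<Rightarrow> ('l \<times> 'r) set \<Rightarrow> rat" where
  "mweight w M = (\<Sum>(l, r)\<in>M. w l r)"

definition covered :: "('l \<times> 'r) set \<Rightarrow> ('l, 'r) vtx \<Rightarrow> bool" where
  "covered M v = (case v of Inl l \<Rightarrow> (\<exists>r. (l, r) \<in> M) | Inr r \<Rightarrow> (\<exists>l. (l, r) \<in> M))"

fun edge_of :: "('l, 'r) vtx \<Rightarrow> ('l, 'r) vtx \<Rightarrow> ('l \<times> 'r) set" where
  "edge_of (Inl l) (Inr r) = {(l, r)}"
| "edge_of (Inr r) (Inl l) = {(l, r)}"
| "edge_of _ _ = {}"

fun opposite :: "('l, 'r) vtx \<Rightarrow> ('l, 'r) vtx \<Rightarrow> bool" where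
  "opposite (Inl _) (Inr _) = True"
| "opposite (Inr _) (Inl _) = True"
| "opposite _ _ = False"

definition path_edge :: "('l, 'r) vtx list \<Rightarrow> nat \<Rightarrow> 'l \<times> 'r" where
  "path_edge p i = (THE e. e \<in> edge_of (p ! i) (p ! Suc i))"

definition path_edges :: "('l, 'r) vtx list \<Rightarrow> ('l \<times> 'r) set" where
  "path_edges p = (\<Union>i\<in>{i. Suc i < length p}. edge_of (p ! i) (p ! Suc i))"

definition augmenting_path ::
  "'l set \<Rightarrow> 'r set \<Rightarrow> ('l \<times> 'r) set \<Rightarrow> ('l, 'r) vtx list \<Rightarrow> bool" where
  "augmenting_path A R M p \<longleftrightarrow>
     length p \<ge> 2 \<and> distinct p \<and>
     set p \<subseteq> Inl ` A \<union> Inr ` R \<and>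
     (\<forall>i. Suc i < length p \<longrightarrow> opposite (p ! i) (p ! Suc i)) \<and>
     \<not> covered M (hd p) \<and> \<not> covered M (last p) \<and>
     (\<forall>i. i + 2 < length p \<longrightarrow>
        (path_edge p i \<in> M \<longleftrightarrow> path_edge p (Suc i) \<notin> M))"

definition profit :: "('l \<Rightarrow> 'r \<Rightarrow> rat) \<Rightarrow> ('l \<times> 'r) set \<Rightarrow> ('l, 'r) vtx list \<Rightarrow> rat" where
  "profit w M p = mweight w (M - path_edges p \<union> (path_edges p - M)) - mweight w M"

definition kbudget :: nat where "kbudget = 4"

text \<open>One step of the algorithm: vertex u arrives, A is the set of previously arrived
  left vertices, M the current matching, M' the new one.  Ties are broken arbitrarily.\<close>
definition alg_step ::
  "('l \<Rightarrow> 'r \<Rightarrow> rat) \<Rightarrow> 'r set \<Rightarrow> 'l set \<Rightarrow> 'l \<Rightarrow> ('l \<times> 'r) set \<Rightarrow> ('l \<times> 'r) set \<Rightarrow> bool" where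
  "alg_step w R A u M M' \<longleftrightarrow>
     (\<exists>P. augmenting_path (insert u A) R M P \<and> Inl u \<in> set P \<and> length P \<le> kbudget \<and>
        (\<forall>Q. augmenting_path (insert u A) R M Q \<and> Inl u \<in> set Q \<and> length Q \<le> kbudget
              \<longrightarrow> profit w M Q \<le> profit w M P) \<and>
        M' = M - path_edges P \<union> (path_edges P - M))"

text \<open>A run of the algorithm on arrival order \<sigma>: Ms i is the matching after i arrivals.\<close>
definition alg_run ::
  "('l \<Rightarrow> 'r \<Rightarrow> rat) \<Rightarrow> 'r set \<Rightarrow> 'l list \<Rightarrow> (nat \<Rightarrow> ('l \<times> 'r) set) \<Rightarrow> bool" where
  "alg_run w R \<sigma> Ms \<longleftrightarrow> Ms 0 = {} \<and>
     (\<forall>i < length \<sigma>. alg_step w R (set (take i \<sigma>)) (\<sigma> ! i) (Ms i) (Ms (Suc i)))"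

end

theory Submission
  imports Defs
begin

(*
  With the budget k = 4, the vertex u arriving at a matching M either takes a free vertex f
  (gain w u f) or takes a matched vertex s from its partner l, which moves to a free f
  (gain w u s - w l s + w l f); the chosen gain g dominates all these profits.  Let (u, q) be
  an edge of the optimum.  If q is free, w u q <= g.  Otherwise q's partner l satisfies
  w l q - w l f >= w u q - g for every free f, and this lower bound on "q's edge net of
  rerouting its partner" survives all later arrivals: whoever takes q over gains at least as
  much as by any free vertex.  Hence w u q <= g + (weight of q's final edge).  Summing over the
  optimum, the gains telescope to the final weight and the final edges at the vertices q add
  up to at most the final weight again, so OPT <= 2 ALG.
*)

lemma path_edges_singleton [simp]: "path_edges [a] = {}"
  by (simp add: path_edges_def)

lemma path_edges_Cons_Cons [simp]:
  "path_edges (a # b # p) = edge_of a b \<union> path_edges (b # p)"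
proof -
  have "{i. Suc i < length (a # b # p)} = insert 0 (Suc ` {i. Suc i < length (b # p)})"
    by (auto simp: image_iff less_Suc_eq_0_disj)
  then show ?thesis
    unfolding path_edges_def by simp
qed

lemma short_augmenting_path_cases:
  assumes P: "augmenting_path A R M P" and "length P \<le> 4"
    and u: "Inl u \<in> set P" "u \<notin> Domain M"
  obtains f where "f \<in> R - Range M" "path_edges P = {(u, f)}"
  | l s f where "(l, s) \<in> M" "f \<in> R - Range M" "path_edges P = {(u, s), (l, s), (l, f)}"
proof -
  note path_defs = augmenting_path_def path_edge_def covered_def Domain_iff Range_iff
    less_Suc_eq numeral_eq_Suc all_conj_distrib insert_commute
  have "length P \<in> {2, 3, 4}"
    using P \<open>length P \<le> 4\<close> by (auto simp: augmenting_path_def)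
  then consider a b where "P = [a, b]" | a b c where "P = [a, b, c]"
    | a b c d where "P = [a, b, c, d]"
    by (auto simp: length_Suc_conv numeral_eq_Suc)
  then show thesis
  proof cases
    case (1 a b)
    then show thesis using that P u by (cases a; cases b) (auto simp: path_defs)
  next
    case (2 a b c)
    \<comment> \<open>impossible: one of the two edges would be a matching edge at an uncovered end\<close>
    then show thesis using P by (cases a; cases b; cases c) (auto simp: path_defs)
  next
    case (3 a b c d)
    then show thesis using that P u by (cases a; cases b; cases c; cases d) (auto simp: path_defs)
  qed
qed

lemma augmenting_path_single_edge:
  assumes "u \<in> A" "u \<notin> Domain M" "f \<in> R - Range M"
  shows "augmenting_path A R M [Inl u, Inr f]"
  using assms by (auto simp: augmenting_path_def covered_def less_Suc_eq)

lemma augmenting_path_three_edges: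
  assumes "u \<in> A" "u \<notin> Domain M" "(l, s) \<in> M" "l \<in> A" "s \<in> R" "f \<in> R - Range M"
  shows "augmenting_path A R M [Inl u, Inr s, Inl l, Inr f]"
  using assms
  by (auto simp: augmenting_path_def path_edge_def covered_def less_Suc_eq numeral_eq_Suc)

lemma augment_single_edge:
  assumes "finite M" "u \<notin> Domain M"
  shows "sym_diff M {(u, f)} = insert (u, f) M"
    and "mweight w (insert (u, f) M) = mweight w M + w u f"
  using assms by (auto simp: mweight_def Domain_iff)

lemma augment_three_edges:
  assumes "finite M" "u \<notin> Domain M" "(l, s) \<in> M" "f \<notin> Range M"
  shows "sym_diff M {(u, s), (l, s), (l, f)} = insert (u, s) (insert (l, f) (M - {(l, s)}))"
    and "mweight w (insert (u, s) (insert (l, f) (M - {(l, s)}))) = mweight w M + w u s - w l s + w l f"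
proof -
  have "(u, s) \<notin> M" "(l, f) \<notin> M" "u \<noteq> l" "s \<noteq> f"
    using assms by auto
  then show "sym_diff M {(u, s), (l, s), (l, f)} = insert (u, s) (insert (l, f) (M - {(l, s)}))"
    using assms by auto
  show "mweight w (insert (u, s) (insert (l, f) (M - {(l, s)}))) = mweight w M + w u s - w l s + w l f"
    using \<open>(u, s) \<notin> M\<close> \<open>(l, f) \<notin> M\<close> \<open>u \<noteq> l\<close> assms(1,3)
    by (simp add: mweight_def sum.remove)
qed

lemma profit_single_edge:
  assumes "finite M" "u \<notin> Domain M"
  shows "profit w M [Inl u, Inr f] = w u f"
  using augment_single_edge[OF assms] by (simp add: profit_def)

lemma profit_three_edges:
  assumes "finite M" "u \<notin> Domain M" "(l, s) \<in> M" "f \<notin> Range M"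
  shows "profit w M [Inl u, Inr s, Inl l, Inr f] = w u s - w l s + w l f"
proof -
  have "path_edges [Inl u, Inr s, Inl l, Inr f] = {(u, s), (l, s), (l, f)}"
    by auto
  then show ?thesis
    unfolding profit_def using augment_three_edges[OF assms] by simp
qed

definition short_augmenting_step ::
  "('l \<Rightarrow> 'r \<Rightarrow> rat) \<Rightarrow> 'r set \<Rightarrow> 'l \<Rightarrow> ('l \<times> 'r) set \<Rightarrow> ('l \<times> 'r) set \<Rightarrow> bool" where
  "short_augmenting_step w R u M M' \<longleftrightarrow>
     (\<forall>f \<in> R - Range M. w u f \<le> mweight w M' - mweight w M) \<and>
     (\<forall>l s f. (l, s) \<in> M \<longrightarrow> f \<in> R - Range M \<longrightarrow>
        w u s - w l s + w l f \<le> mweight w M' - mweight w M) \<and>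
     ((\<exists>f \<in> R - Range M. M' = insert (u, f) M) \<or>
      (\<exists>l s f. (l, s) \<in> M \<and> f \<in> R - Range M \<and>
         M' = insert (u, s) (insert (l, f) (M - {(l, s)})) \<and>
         mweight w M' = mweight w M + w u s - w l s + w l f))"

lemma alg_step_short_augmenting_step:
  assumes step: "alg_step w R A u M M'" and M: "finite M" "M \<subseteq> A \<times> R" and "u \<notin> A"
  shows "short_augmenting_step w R u M M'"
proof -
  obtain P where P: "augmenting_path (insert u A) R M P" "length P \<le> 4" "Inl u \<in> set P"
    and best: "\<And>Q. augmenting_path (insert u A) R M Q \<Longrightarrow> Inl u \<in> set Q \<Longrightarrow> length Q \<le> 4 \<Longrightarrow>
      profit w M Q \<le> profit w M P"
    and M': "M' = sym_diff M (path_edges P)"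
    using step by (auto simp: alg_step_def kbudget_def)
  have u: "u \<notin> Domain M"
    using M \<open>u \<notin> A\<close> by auto
  have gain: "mweight w M' - mweight w M = profit w M P"
    by (simp add: profit_def M')
  have "w u f \<le> mweight w M' - mweight w M" if f: "f \<in> R - Range M" for f
    using best[OF augmenting_path_single_edge[OF _ u f]] profit_single_edge[OF M(1) u] gain
    by simp
  moreover have "w u s - w l s + w l f \<le> mweight w M' - mweight w M"
    if ls: "(l, s) \<in> M" and f: "f \<in> R - Range M" for l s f
  proof -
    have "l \<in> insert u A" "s \<in> R"
      using ls M by auto
    then show ?thesis
      using best[OF augmenting_path_three_edges[OF _ u ls _ _ f]] gain
        profit_three_edges[OF M(1) u ls] f by simp
  qed
  moreover have "(\<exists>f \<in> R - Range M. M' = insert (u, f) M) \<or>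
    (\<exists>l s f. (l, s) \<in> M \<and> f \<in> R - Range M \<and> M' = insert (u, s) (insert (l, f) (M - {(l, s)})) \<and>
       mweight w M' = mweight w M + w u s - w l s + w l f)"
    using P(1,2,3) u
  proof (cases rule: short_augmenting_path_cases)
    case (1 f)
    then have "M' = insert (u, f) M"
      using augment_single_edge(1)[OF M(1) u] M' by simp
    with 1 show ?thesis by blast
  next
    case (2 l s f)
    then have "M' = insert (u, s) (insert (l, f) (M - {(l, s)}))"
      using augment_three_edges(1)[OF M(1) u] M' by simp
    moreover have "mweight w M' = mweight w M + w u s - w l s + w l f"
      using augment_three_edges(2)[OF M(1) u] 2 calculation by simp
    ultimately show ?thesis using 2 by blast
  qed
  ultimately show ?thesis
    unfolding short_augmenting_step_def by blast
qed

lemma is_matching_insert: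
  "is_matching M \<Longrightarrow> l \<notin> Domain M \<Longrightarrow> r \<notin> Range M \<Longrightarrow> is_matching (insert (l, r) M)"
  by (auto simp: is_matching_def)

lemma short_augmenting_step_left_perfect:
  assumes M: "left_perfect A R M" and "u \<notin> A" and step: "short_augmenting_step w R u M M'"
  shows "left_perfect (insert u A) R M'"
proof -
  from step consider f where "f \<in> R - Range M" "M' = insert (u, f) M"
    | l s f where "(l, s) \<in> M" "f \<in> R - Range M" "M' = insert (u, s) (insert (l, f) (M - {(l, s)}))"
    unfolding short_augmenting_step_def by blast
  then show ?thesis
  proof cases
    case (1 f)
    then have "is_matching M'"
      using M \<open>u \<notin> A\<close> by (auto simp: left_perfect_def intro!: is_matching_insert)
    then show ?thesis
      using 1 M by (auto simp: left_perfect_def)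
  next
    case (2 l s f)
    have "is_matching (M - {(l, s)})" "l \<notin> Domain (M - {(l, s)})" "s \<notin> Range (M - {(l, s)})"
      using M 2(1) by (auto simp: left_perfect_def is_matching_def)
    then have "is_matching M'"
      using 2 M \<open>u \<notin> A\<close> by (auto simp: left_perfect_def intro!: is_matching_insert)
    moreover have "\<exists>r. (x, r) \<in> M'" if "x \<in> insert u A" for x
      using that 2 M by (cases "x = l") (auto simp: left_perfect_def)
    ultimately show ?thesis
      using 2 M by (auto simp: left_perfect_def)
  qed
qed

lemma left_perfect_finite: "left_perfect A R M \<Longrightarrow> finite A \<Longrightarrow> finite R \<Longrightarrow> finite M"
  unfolding left_perfect_def by (meson finite_SigmaI finite_subset)

lemma distinct_nth_notin_take: "distinct xs \<Longrightarrow> i < length xs \<Longrightarrow> xs ! i \<notin> set (take i xs)"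
  by (metis distinct_take take_Suc_conv_app_nth distinct_append disjoint_iff list.set_intros(1))

lemma alg_run_step:
  assumes "finite R" "distinct \<sigma>" and run: "alg_run w R \<sigma> Ms" and t: "t < length \<sigma>"
    and M: "left_perfect (set (take t \<sigma>)) R (Ms t)"
  shows "short_augmenting_step w R (\<sigma> ! t) (Ms t) (Ms (Suc t))"
proof (rule alg_step_short_augmenting_step)
  show "alg_step w R (set (take t \<sigma>)) (\<sigma> ! t) (Ms t) (Ms (Suc t))"
    using run t by (simp add: alg_run_def)
  show "finite (Ms t)"
    using M \<open>finite R\<close> by (simp add: left_perfect_finite)
  show "Ms t \<subseteq> set (take t \<sigma>) \<times> R"
    using M by (simp add: left_perfect_def)
  show "\<sigma> ! t \<notin> set (take t \<sigma>)"
    using \<open>distinct \<sigma>\<close> t by (rule distinct_nth_notin_take)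
qed

lemma alg_run_left_perfect:
  assumes "finite R" "distinct \<sigma>" and run: "alg_run w R \<sigma> Ms"
  shows "t \<le> length \<sigma> \<Longrightarrow> left_perfect (set (take t \<sigma>)) R (Ms t)"
proof (induction t)
  case 0
  then show ?case
    using run by (simp add: alg_run_def left_perfect_def is_matching_def)
next
  case (Suc t)
  then have t: "t < length \<sigma>" and M: "left_perfect (set (take t \<sigma>)) R (Ms t)"
    by simp_all
  have "left_perfect (insert (\<sigma> ! t) (set (take t \<sigma>))) R (Ms (Suc t))"
  proof (rule short_augmenting_step_left_perfect[OF M])
    show "\<sigma> ! t \<notin> set (take t \<sigma>)"
      using \<open>distinct \<sigma>\<close> t by (rule distinct_nth_notin_take)
    show "short_augmenting_step w R (\<sigma> ! t) (Ms t) (Ms (Suc t))"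
      using assms t M by (rule alg_run_step)
  qed
  then show ?case
    using t by (simp add: take_Suc_conv_app_nth)
qed

lemma exists_unmatched_right:
  assumes M: "left_perfect A R M" and "finite A" "finite R" "card A < card R"
  obtains f where "f \<in> R - Range M"
proof -
  have "finite M"
    using assms(1-3) by (rule left_perfect_finite)
  have "inj_on fst M"
    using M by (auto simp: left_perfect_def is_matching_def inj_on_def)
  then have "card (Range M) \<le> card (Domain M)"
    using \<open>finite M\<close> by (simp add: Range_snd Domain_fst card_image card_image_le)
  also have "\<dots> \<le> card A"
    using M \<open>finite A\<close> by (intro card_mono) (auto simp: left_perfect_def)
  finally have "Range M \<noteq> R"
    using \<open>card A < card R\<close> by auto
  moreover have "Range M \<subseteq> R"
    using M by (auto simp: left_perfect_def)
  ultimately show thesis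
    using that by blast
qed

definition partner_bound ::
  "('l \<Rightarrow> 'r \<Rightarrow> rat) \<Rightarrow> 'r set \<Rightarrow> ('l \<times> 'r) set \<Rightarrow> 'r \<Rightarrow> rat \<Rightarrow> bool" where
  "partner_bound w R M r c \<longleftrightarrow>
     (\<exists>l. (l, r) \<in> M \<and> c \<le> w l r \<and> (\<forall>f \<in> R - Range M. c \<le> w l r - w l f))"

lemma short_augmenting_step_partner_bound_arrival:
  assumes step: "short_augmenting_step w R u M M'" and "(l, r) \<in> M" "f0 \<in> R - Range M"
    and nonneg: "\<forall>l r. 0 \<le> w l r"
  shows "partner_bound w R M r (w u r - (mweight w M' - mweight w M))"
proof -
  have "w u r - w l r + w l f \<le> mweight w M' - mweight w M" if "f \<in> R - Range M" for f
    using step \<open>(l, r) \<in> M\<close> that unfolding short_augmenting_step_def by blast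
  then have "w u r - (mweight w M' - mweight w M) \<le> w l r - w l f" if "f \<in> R - Range M" for f
    using that by fastforce
  moreover from this[OF \<open>f0 \<in> R - Range M\<close>] have "w u r - (mweight w M' - mweight w M) \<le> w l r"
    using nonneg[rule_format, of l f0] by linarith
  ultimately show ?thesis
    using \<open>(l, r) \<in> M\<close> by (auto simp: partner_bound_def)
qed

lemma short_augmenting_step_partner_bound:
  assumes step: "short_augmenting_step w R u M M'" and nonneg: "\<forall>l r. 0 \<le> w l r"
    and "partner_bound w R M r c"
  shows "partner_bound w R M' r c"
proof -
  obtain l where l: "(l, r) \<in> M" "c \<le> w l r" "\<forall>f \<in> R - Range M. c \<le> w l r - w l f"
    using \<open>partner_bound w R M r c\<close> by (auto simp: partner_bound_def)
  have gain: "\<forall>f \<in> R - Range M. w u f \<le> mweight w M' - mweight w M"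
    using step by (simp add: short_augmenting_step_def)
  from step consider f0 where "M' = insert (u, f0) M"
    | l' s f0 where "(l', s) \<in> M" "f0 \<in> R - Range M" "M' = insert (u, s) (insert (l', f0) (M - {(l', s)}))"
      "mweight w M' = mweight w M + w u s - w l' s + w l' f0"
    unfolding short_augmenting_step_def by blast
  then show ?thesis
  proof cases
    case (1 f0)
    then show ?thesis
      using l unfolding partner_bound_def by blast
  next
    case (2 l' s f0)
    have free: "R - Range M' \<subseteq> R - Range M"
      using 2 by auto
    show ?thesis
    proof (cases "(l, r) = (l', s)")
      case False
      then have "(l, r) \<in> M'"
        using 2 l by auto
      then show ?thesis
        using l free unfolding partner_bound_def by blast
    next
      case True
      have "mweight w M' - mweight w M = w u r - w l r + w l f0"
        using 2 True by simp
      moreover have "c \<le> w l r - w l f0"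
        using l(3) 2(2) by blast
      ultimately have "c \<le> w u r - w u f" if "f \<in> R - Range M" for f
        using gain[rule_format, OF that] by linarith
      moreover from this[OF \<open>f0 \<in> R - Range M\<close>] have "c \<le> w u r"
        using nonneg[rule_format, of u f0] by linarith
      moreover have "(u, r) \<in> M'"
        using 2 True by auto
      ultimately show ?thesis
        using free unfolding partner_bound_def by blast
    qed
  qed
qed

lemma partner_bound_le_edge_weight:
  assumes "is_matching M" "partner_bound w R M r c"
  shows "c \<le> mweight w {e \<in> M. snd e = r}"
proof -
  obtain l where "(l, r) \<in> M" "c \<le> w l r"
    using assms(2) by (auto simp: partner_bound_def)
  moreover from this have "{e \<in> M. snd e = r} = {(l, r)}"
    using assms(1) by (auto simp: is_matching_def)
  ultimately show ?thesis
    by (simp add: mweight_def)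
qed

lemma alg_run_partner_bound:
  assumes "finite R" "distinct \<sigma>" "alg_run w R \<sigma> Ms" and nonneg: "\<forall>l r. 0 \<le> w l r"
    and "partner_bound w R (Ms t) r c" "t \<le> j" "j \<le> length \<sigma>"
  shows "partner_bound w R (Ms j) r c"
  using \<open>t \<le> j\<close> \<open>j \<le> length \<sigma>\<close>
proof (induction j rule: dec_induct)
  case base
  then show ?case using assms by simp
next
  case (step j)
  then have "short_augmenting_step w R (\<sigma> ! j) (Ms j) (Ms (Suc j))"
    using assms(1-3) by (simp add: alg_run_step alg_run_left_perfect)
  then show ?case
    using step nonneg by (simp add: short_augmenting_step_partner_bound)
qed

lemma alg_run_arrival_bound:
  assumes "finite R" "distinct \<sigma>" "card (set \<sigma>) \<le> card R" and nonneg: "\<forall>l r. 0 \<le> w l r"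
    and run: "alg_run w R \<sigma> Ms" and t: "t < length \<sigma>" and "q \<in> R"
  shows "w (\<sigma> ! t) q \<le> (mweight w (Ms (Suc t)) - mweight w (Ms t)) + mweight w {e \<in> Ms (length \<sigma>). snd e = q}"
proof -
  let ?n = "length \<sigma>" and ?g = "mweight w (Ms (Suc t)) - mweight w (Ms t)"
  have M: "left_perfect (set (take t \<sigma>)) R (Ms t)"
    using assms(1,2) run t by (simp add: alg_run_left_perfect)
  have step: "short_augmenting_step w R (\<sigma> ! t) (Ms t) (Ms (Suc t))"
    using assms(1,2) run t M by (rule alg_run_step)
  have final: "is_matching (Ms ?n)"
    using alg_run_left_perfect[OF assms(1,2) run] by (simp add: left_perfect_def)
  show ?thesis
  proof (cases "q \<in> Range (Ms t)")
    case False
    have "0 \<le> mweight w {e \<in> Ms ?n. snd e = q}"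
      using nonneg by (auto simp: mweight_def intro: sum_nonneg)
    moreover have "w (\<sigma> ! t) q \<le> ?g"
      using step False \<open>q \<in> R\<close> unfolding short_augmenting_step_def by blast
    ultimately show ?thesis
      by linarith
  next
    case True
    then obtain l where "(l, q) \<in> Ms t"
      by auto
    have "card (set (take t \<sigma>)) < card R"
      using assms(2,3) t by (simp add: distinct_card)
    then obtain f0 where "f0 \<in> R - Range (Ms t)"
      using M assms(1) by (auto elim: exists_unmatched_right)
    with step \<open>(l, q) \<in> Ms t\<close> have "partner_bound w R (Ms t) q (w (\<sigma> ! t) q - ?g)"
      using nonneg by (rule short_augmenting_step_partner_bound_arrival)
    then have "partner_bound w R (Ms ?n) q (w (\<sigma> ! t) q - ?g)"
      using alg_run_partner_bound[OF assms(1,2) run nonneg] t by simp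
    then show ?thesis
      using partner_bound_le_edge_weight[OF final] by fastforce
  qed
qed

lemma left_perfect_weight_le_charges:
  assumes M: "left_perfect A R M" and "finite A" "finite R"
    and charge: "\<And>l r. (l, r) \<in> M \<Longrightarrow> w l r \<le> G l + H r" and "\<forall>r \<in> R. 0 \<le> H r"
  shows "mweight w M \<le> sum G A + sum H R"
proof -
  have "finite M"
    using assms(1-3) by (rule left_perfect_finite)
  have inj: "inj_on fst M" "inj_on snd M"
    using M by (auto simp: left_perfect_def is_matching_def inj_on_def)
  have "mweight w M \<le> (\<Sum>e\<in>M. G (fst e) + H (snd e))"
    unfolding mweight_def using charge by (intro sum_mono) auto
  also have "\<dots> = sum G (fst ` M) + sum H (snd ` M)"
    by (simp add: sum.distrib sum.reindex[OF inj(1)] sum.reindex[OF inj(2)])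
  also have "fst ` M = A"
    using M by (force simp: left_perfect_def)
  also have "sum H (snd ` M) \<le> sum H R"
    using M \<open>finite R\<close> \<open>\<forall>r \<in> R. 0 \<le> H r\<close> by (intro sum_mono2) (auto simp: left_perfect_def)
  finally show ?thesis
    by simp
qed

lemma alg_run_mweight_telescope:
  assumes "alg_run w R \<sigma> Ms"
  shows "(\<Sum>t<n. mweight w (Ms (Suc t)) - mweight w (Ms t)) = mweight w (Ms n)"
  using sum_lessThan_telescope[of "\<lambda>t. mweight w (Ms t)" n] assms
  by (simp add: alg_run_def mweight_def)

lemma mweight_sum_right_vertices:
  assumes "finite M" "finite R" "Range M \<subseteq> R"
  shows "(\<Sum>q \<in> R. mweight w {e \<in> M. snd e = q}) = mweight w M"
  unfolding mweight_def using assms by (intro sum.group) (auto simp: Range_snd)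

theorem theorem3:
  fixes w :: "'l \<Rightarrow> 'r \<Rightarrow> rat" and R :: "'r set" and \<sigma> :: "'l list"
    and Ms :: "nat \<Rightarrow> ('l \<times> 'r) set" and Mopt :: "('l \<times> 'r) set"
  assumes "finite R"
    and "distinct \<sigma>"
    and "card (set \<sigma>) \<le> card R"
    and "\<forall>l r. 0 \<le> w l r"
    and "alg_run w R \<sigma> Ms"
    and "left_perfect (set \<sigma>) R Mopt"
  shows "mweight w (Ms (length \<sigma>)) \<ge> (1/2) * mweight w Mopt"
proof -
  let ?n = "length \<sigma>" and ?M = "Ms (length \<sigma>)"
  define g where "g t = mweight w (Ms (Suc t)) - mweight w (Ms t)" for t
  define G where "G l = (\<Sum>t \<in> {t \<in> {..<?n}. \<sigma> ! t = l}. g t)" for l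
  define H where "H q = mweight w {e \<in> ?M. snd e = q}" for q
  have "mweight w Mopt \<le> sum G (set \<sigma>) + sum H R"
  proof (rule left_perfect_weight_le_charges[OF assms(6) finite_set assms(1)])
    fix l q
    assume "(l, q) \<in> Mopt"
    then have "l \<in> set \<sigma>" "q \<in> R"
      using assms(6) by (auto simp: left_perfect_def)
    then obtain t where t: "t < ?n" "l = \<sigma> ! t"
      by (metis in_set_conv_nth)
    then have "{t' \<in> {..<?n}. \<sigma> ! t' = l} = {t}"
      using assms(2) by (auto simp: nth_eq_iff_index_eq)
    then show "w l q \<le> G l + H q"
      using alg_run_arrival_bound[OF assms(1-5) t(1) \<open>q \<in> R\<close>] t by (simp add: G_def H_def g_def)
  qed (use assms(4) in \<open>auto simp: H_def mweight_def intro: sum_nonneg\<close>)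
  also have "sum G (set \<sigma>) = (\<Sum>t<?n. g t)"
    unfolding G_def by (rule sum.group) auto
  also have "\<dots> = mweight w ?M"
    unfolding g_def using assms(5) by (rule alg_run_mweight_telescope)
  also have "sum H R = mweight w ?M"
    unfolding H_def using alg_run_left_perfect[OF assms(1,2,5), of ?n] assms(1)
    by (intro mweight_sum_right_vertices) (auto simp: left_perfect_def left_perfect_finite)
  finally show ?thesis
    by simp
qed

end
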